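(* Let $n$ be a positive integer and $w_1\le\dots\le w_m$ a feasible partition of $n$ with partial sums $R_i=w_1+\dots+w_i$, $R_0=0$. Then for every $1\le i\le m$, $R_{i-1} \ge \frac{w_i-1}{2}$.
   Context: A weighing partition of a positive integer $n$ is a multiset of positive integers summing to $n$ such that every integer $\ell$ with $1\le\ell\le n$ is a sum $\sum_j u_jw_j$ with $u_j\in\{-1,0,1\}$. A feasible partition of $n$ is a weighing partition of $n$ whose number of parts $m$ is minimal among all weighing partitions of $n$, written $w_1\le\dots\le w_m$. *)

theory Defs
  imports Complex_Main
begin

text \<open>A partition of n is represented as a list of positive integers summing to n
  (the multiset of parts is mset of the list; order is irrelevant for the notions below).\<close>

definition weighing_partition :: "nat \<Rightarrow> nat list \<Rightarrow> bool" where
  "weighing_partition n ws \<longleftrightarrow>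
     (\<forall>w\<in>set ws. 0 < w) \<and> sum_list ws = n \<and>
     (\<forall>l\<in>{1..n}. \<exists>u :: nat \<Rightarrow> int. (\<forall>j<length ws. u j \<in> {-1, 0, 1}) \<and>
        int l = (\<Sum>j<length ws. u j * int (ws ! j)))"

definition feasible_partition :: "nat \<Rightarrow> nat list \<Rightarrow> bool" where
  "feasible_partition n ws \<longleftrightarrow> weighing_partition n ws \<and>
     (\<forall>vs. weighing_partition n vs \<longrightarrow> length ws \<le> length vs)"

end

theory Submission
  imports Defs
begin

text \<open>Write \<open>S = w\<^sub>1 + \<dots> + w\<^sub>k\<close> and suppose \<open>w\<^sub>k\<^sub>+\<^sub>1 \<ge> 2S + 2\<close>.
  Then \<open>l = n - (2S + 1)\<close> lies in \<open>1..n\<close>, so \<open>n - l = 2S + 1\<close> is a sum of the parts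
  with coefficients \<open>1 - u\<^sub>j \<in> {0,1,2}\<close>. Since \<open>w\<close> is sorted, any nonzero coefficient
  on a part from \<open>w\<^sub>k\<^sub>+\<^sub>1\<close> on would push this sum to at least \<open>w\<^sub>k\<^sub>+\<^sub>1 > 2S + 1\<close>; so only
  the first \<open>k\<close> parts occur, and the sum is at most \<open>2S\<close>, a contradiction.\<close>

lemma weighing_partition_sum_nth:
  assumes "weighing_partition n w"
  shows "(\<Sum>j<length w. w ! j) = n"
  using assms by (simp add: weighing_partition_def sum_list_sum_nth atLeast0LessThan)

lemma weighing_partition_complement_repr:
  assumes "weighing_partition n w" and "l \<in> {1..n}"
  obtains c :: "nat \<Rightarrow> int"
  where "\<forall>j<length w. c j \<in> {0, 1, 2}"
    and "int (n - l) = (\<Sum>j<length w. c j * int (w ! j))"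
proof -
  obtain u :: "nat \<Rightarrow> int" where u: "\<forall>j<length w. u j \<in> {-1, 0, 1}"
    and l: "int l = (\<Sum>j<length w. u j * int (w ! j))"
    using assms unfolding weighing_partition_def by blast
  have n: "int n = (\<Sum>j<length w. int (w ! j))"
    by (simp add: weighing_partition_sum_nth[OF assms(1), symmetric])
  have "\<forall>j<length w. 1 - u j \<in> {0, 1, 2}"
    using u by auto
  moreover have "int (n - l) = (\<Sum>j<length w. (1 - u j) * int (w ! j))"
    using assms(2) n l by (simp add: sum_subtractf algebra_simps)
  ultimately show thesis
    by (rule that)
qed

lemma sorted_coeff_sum_le_twice_prefix:
  fixes c :: "nat \<Rightarrow> int"
  assumes "sorted w" and "k < length w"
    and coeffs: "\<forall>j<length w. c j \<in> {0, 1, 2}"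
    and small: "(\<Sum>j<length w. c j * int (w ! j)) < int (w ! k)"
  shows "(\<Sum>j<length w. c j * int (w ! j)) \<le> 2 * int (\<Sum>j<k. w ! j)"
proof -
  let ?t = "\<lambda>j. c j * int (w ! j)"
  have tail_zero: "c j = 0" if "k \<le> j" "j < length w" for j
  proof (rule ccontr)
    assume "c j \<noteq> 0"
    moreover have "c j \<in> {0, 1, 2}"
      using coeffs that(2) by blast
    ultimately have "1 \<le> c j"
      by auto
    have "w ! k \<le> w ! j"
      using \<open>sorted w\<close> that by (simp add: sorted_iff_nth_mono)
    then have "int (w ! k) \<le> 1 * int (w ! j)"
      by simp
    also have "\<dots> \<le> ?t j"
      using \<open>1 \<le> c j\<close> by (rule mult_right_mono) simp
    also have "\<dots> \<le> (\<Sum>j<length w. ?t j)"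
      by (rule member_le_sum) (use coeffs that in auto)
    finally show False
      using small by simp
  qed
  have "(\<Sum>j<length w. ?t j) = (\<Sum>j<k. ?t j)"
    by (rule sum.mono_neutral_right) (use assms(2) tail_zero in auto)
  also have "\<dots> \<le> (\<Sum>j<k. 2 * int (w ! j))"
  proof (rule sum_mono)
    fix j
    assume "j \<in> {..<k}"
    then have "j < length w"
      using assms(2) by simp
    then have "c j \<in> {0, 1, 2}"
      using coeffs by blast
    then have "c j \<le> 2"
      by auto
    then show "?t j \<le> 2 * int (w ! j)"
      by (rule mult_right_mono) simp
  qed
  finally show ?thesis
    by (simp add: sum_distrib_left)
qed

lemma sorted_weighing_partition_part_le:
  assumes "weighing_partition n w" and "sorted w" and "k < length w"
  shows "w ! k \<le> 2 * (\<Sum>j<k. w ! j) + 1"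
proof (rule ccontr)
  define S where "S = (\<Sum>j<k. w ! j)"
  assume "\<not> w ! k \<le> 2 * (\<Sum>j<k. w ! j) + 1"
  then have big: "2 * S + 2 \<le> w ! k"
    by (simp add: S_def)
  have "S + w ! k = (\<Sum>j\<in>insert k {..<k}. w ! j)"
    by (simp add: S_def)
  also have "\<dots> \<le> (\<Sum>j<length w. w ! j)"
    by (rule sum_mono2) (use assms(3) in auto)
  also have "\<dots> = n"
    using assms(1) by (rule weighing_partition_sum_nth)
  finally have "S + w ! k \<le> n" .
  then have "n - (2 * S + 1) \<in> {1..n}"
    using big by simp
  then obtain c :: "nat \<Rightarrow> int" where coeffs: "\<forall>j<length w. c j \<in> {0, 1, 2}"
    and repr: "int (n - (n - (2 * S + 1))) = (\<Sum>j<length w. c j * int (w ! j))"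
    using weighing_partition_complement_repr[OF assms(1)] by blast
  have sum: "(\<Sum>j<length w. c j * int (w ! j)) = 2 * int S + 1"
    using repr \<open>S + w ! k \<le> n\<close> big by simp
  then have "(\<Sum>j<length w. c j * int (w ! j)) < int (w ! k)"
    using big by simp
  from sorted_coeff_sum_le_twice_prefix[OF assms(2,3) coeffs this]
  have "(\<Sum>j<length w. c j * int (w ! j)) \<le> 2 * int S"
    unfolding S_def .
  then show False
    using sum by simp
qed

theorem mainTheorem3:
  fixes n :: nat and w :: "nat list"
  assumes "0 < n"
    and "feasible_partition n w"
    and "sorted w"
    and "1 \<le> i" and "i \<le> length w"
  shows "real (\<Sum>j<i - 1. w ! j) \<ge> (real (w ! (i - 1)) - 1) / 2"
proof -
  have "weighing_partition n w"
    using assms(2) by (simp add: feasible_partition_def)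
  then have "w ! (i - 1) \<le> 2 * (\<Sum>j<i - 1. w ! j) + 1"
    using sorted_weighing_partition_part_le assms(3-5) by simp
  then have "real (w ! (i - 1)) \<le> 2 * real (\<Sum>j<i - 1. w ! j) + 1"
    by linarith
  then show ?thesis
    by simp
qed

end
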